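(* Richard Thompson's group $F$ is not presentable by a product.
   Context: Thompson's group $F$ is the group of piecewise linear orientation-preserving homeomorphisms of $[0,1]$ with finitely many breakpoints, all at dyadic rationals, and all slopes integral powers of $2$. An infinite group $\Gamma$ is not presentable by a product if for every homomorphism $\varphi\colon \Gamma_1\times\Gamma_2\to\Gamma$ whose image has finite index in $\Gamma$, at least one of $\varphi(\Gamma_1)$, $\varphi(\Gamma_2)$ is finite. *)

theory Defs
  imports "HOL-Analysis.Analysis" "HOL-Algebra.Algebra"
begin

definition dyadic :: "real \<Rightarrow> bool" where
  "dyadic x \<longleftrightarrow> (\<exists>(m::int) (n::nat). x = of_int m / 2 ^ n)"

text \<open>To obtain a canonical
  representative as a HOL function real => real, f is required to be the
  identity outside [0,1].\<close>
definition thompsonF_carrier :: "(real \<Rightarrow> real) set" where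
  "thompsonF_carrier = {f.
     (\<exists>g. homeomorphism {0..1} {0..1} f g) \<and>
     strict_mono_on {0..1} f \<and>
     (\<exists>xs::real list. length xs \<ge> 2 \<and> sorted_wrt (<) xs \<and>
        hd xs = 0 \<and> last xs = 1 \<and> (\<forall>x\<in>set xs. dyadic x) \<and>
        (\<forall>i. Suc i < length xs \<longrightarrow>
           (\<exists>(k::int) (b::real). \<forall>x\<in>{xs!i..xs!Suc i}. f x = 2 powr (real_of_int k) * x + b))) \<and>
     (\<forall>x. x \<notin> {0..1} \<longrightarrow> f x = x)}"

definition thompsonF :: "(real \<Rightarrow> real) monoid" where
  "thompsonF = \<lparr>carrier = thompsonF_carrier, mult = (\<lambda>f g. f \<circ> g), one = id\<rparr>"

end

theory Submission
  imports Defs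
begin

text \<open>Elements of F are order-preserving homeomorphisms of the line supported in \<open>(0,1)\<close>.
  Let \<open>A\<close> and \<open>B\<close> be the commuting images of the two factors; finite index of \<open>AB\<close> means
  that every element of F has a positive power in \<open>AB\<close>.

  First, \<open>a \<in> A\<close> and \<open>b \<in> B\<close> have disjoint supports. Otherwise pick a dyadic point \<open>p\<close>
  moved by both and a dyadic interval \<open>I = (p, q)\<close> so short that \<open>a\<close> moves \<open>I\<close> off itself.
  A positive power \<open>h = a' b'\<close> of a bump supported on \<open>I\<close> lies in \<open>AB\<close>; the commutator
  \<open>[a, h] = [a, a']\<close> lies in \<open>A\<close> and moves exactly the points of \<open>I\<close> downwards. Since \<open>b\<close>
  commutes with it, \<open>b\<close> preserves \<open>I\<close> and therefore fixes \<open>p\<close>, a contradiction.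

  Second, a positive power \<open>a b\<close> of a bump supported on all of \<open>(0,1)\<close> moves every point
  of \<open>(0,1)\<close>, so the open supports of \<open>a\<close> and \<open>b\<close> cover the connected set \<open>(0,1)\<close> and are
  disjoint. One of them is empty, the other is all of \<open>(0,1)\<close>, and by the first step the
  corresponding factor is trivial.\<close>

lemma (in group) finite_index_power_in_subgroup:
  assumes H: "subgroup H G" and fin: "finite (rcosets H)" and g: "g \<in> carrier G"
  shows "\<exists>n::nat. 0 < n \<and> g [^] n \<in> H"
proof -
  define c where "c i = H #> g [^] (i::nat)" for i
  have "range c \<subseteq> rcosets H"
    using rcosetsI subgroup.subset[OF H] g unfolding c_def by auto
  then have "\<not> inj c"
    using fin finite_subset finite_imageD infinite_UNIV_nat by metis
  then obtain i j where ij: "i < j" "c i = c j"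
    unfolding inj_def by (metis linorder_neqE_nat)
  have "g [^] j \<in> H #> g [^] i"
    using rcos_self[of "g [^] j" H] H g ij(2) unfolding c_def by simp
  then have "g [^] j \<otimes> inv (g [^] i) \<in> H"
    using subgroup.rcos_module_imp[OF H is_group] g by simp
  moreover have "g [^] j = g [^] (j - i) \<otimes> g [^] i"
    using nat_pow_mult[OF g, of "j - i" i] ij(1) by simp
  then have "g [^] j \<otimes> inv (g [^] i) = g [^] (j - i)"
    using g by (simp add: m_assoc)
  ultimately show ?thesis
    using ij(1) by (intro exI[of _ "j - i"]) simp
qed

section \<open>Dyadic rationals\<close>

lemma dyadic_of_int: "dyadic (of_int m)"
  unfolding dyadic_def by (rule exI[of _ m], rule exI[of _ 0]) simp

lemma dyadic_one_over_power: "dyadic (1 / 2 ^ n)"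
  unfolding dyadic_def by (rule exI[of _ 1], rule exI[of _ n]) simp

lemma dyadic_add:
  assumes "dyadic x" "dyadic y"
  shows "dyadic (x + y)"
proof -
  obtain m n m' n' where x: "x = of_int m / 2 ^ n" and y: "y = of_int m' / 2 ^ n'"
    using assms by (auto simp: dyadic_def)
  have "x + y = of_int (m * 2 ^ n' + m' * 2 ^ n) / 2 ^ (n + n')"
    by (simp add: x y field_simps power_add)
  then show ?thesis
    unfolding dyadic_def by blast
qed

lemma dyadic_uminus: "dyadic x \<Longrightarrow> dyadic (- x)"
  unfolding dyadic_def by (metis minus_divide_left of_int_minus)

lemma dyadic_diff: "dyadic x \<Longrightarrow> dyadic y \<Longrightarrow> dyadic (x - y)"
  using dyadic_add[of x "- y"] dyadic_uminus[of y] by simp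

lemma dyadic_two_powr_mult:
  assumes "dyadic x"
  shows "dyadic (2 powr of_int k * x)"
proof -
  obtain m n where x: "x = of_int m / 2 ^ n"
    using assms by (auto simp: dyadic_def)
  have "2 powr of_int k * x = of_int (m * 2 ^ nat k) / 2 ^ (n + nat (- k))"
    by (cases "0 \<le> k") (simp_all add: powr_int x power_add)
  then show ?thesis
    unfolding dyadic_def by blast
qed

lemma dyadic_between:
  fixes r s :: real
  assumes "r < s"
  shows "\<exists>p. dyadic p \<and> r < p \<and> p < s"
proof -
  obtain n where n: "(1/2::real) ^ n < s - r"
    using real_arch_pow_inv[of "s - r" "1/2"] assms by auto
  define m where "m = \<lfloor>r * 2 ^ n\<rfloor> + 1"
  define p where "p = of_int m / (2::real) ^ n"
  have "r * 2 ^ n < of_int m" "of_int m \<le> r * 2 ^ n + 1"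
    unfolding m_def by linarith+
  then have "r < p" "p \<le> r + 1 / 2 ^ n"
    unfolding p_def by (simp_all add: field_simps)
  moreover have "dyadic p"
    unfolding dyadic_def p_def by blast
  ultimately show ?thesis
    using n by (auto simp: power_divide)
qed

section \<open>Piecewise dyadic affine maps of the unit interval\<close>

lemma strict_sorted_nth_less_iff:
  fixes xs :: "'a::linorder list"
  assumes "sorted_wrt (<) xs" "i < length xs" "j < length xs"
  shows "xs ! i < xs ! j \<longleftrightarrow> i < j"
proof
  assume less: "xs ! i < xs ! j"
  show "i < j"
  proof (rule ccontr)
    assume "\<not> i < j"
    then have "j < i \<or> j = i"
      by auto
    then show False
      using sorted_wrt_nth_less[OF assms(1) _ assms(2), of j] less by auto
  qed
qed (use sorted_wrt_nth_less[OF assms(1) _ assms(3)] in blast)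

lemma strict_sorted_hd_le_le_last:
  fixes xs :: "'a::linorder list"
  assumes "sorted_wrt (<) xs" "y \<in> set xs"
  shows "hd xs \<le> y \<and> y \<le> last xs"
proof -
  obtain j where j: "j < length xs" "y = xs ! j"
    using assms(2) by (metis in_set_conv_nth)
  have le: "xs ! i \<le> xs ! k" if "i \<le> k" "k < length xs" for i k
    using sorted_wrt_nth_less[OF assms(1), of i k] that by (cases "i = k") auto
  have "xs \<noteq> []"
    using j by auto
  moreover have "xs ! 0 \<le> xs ! j" "xs ! j \<le> xs ! (length xs - 1)"
    using le j by auto
  ultimately show ?thesis
    using j by (simp add: hd_conv_nth last_conv_nth)
qed

lemma strict_sorted_consecutive_iff:
  fixes xs :: "'a::linorder list"
  assumes sorted: "sorted_wrt (<) xs"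
  shows "(\<exists>i. Suc i < length xs \<and> u = xs ! i \<and> v = xs ! Suc i) \<longleftrightarrow>
    u \<in> set xs \<and> v \<in> set xs \<and> u < v \<and> {u<..<v} \<inter> set xs = {}"
  (is "?consecutive \<longleftrightarrow> ?gap")
proof
  assume ?consecutive
  then obtain i where i: "Suc i < length xs" "u = xs ! i" "v = xs ! Suc i"
    by blast
  have "e \<notin> set xs" if "u < e" "e < v" for e
  proof
    assume "e \<in> set xs"
    then obtain j where "j < length xs" "e = xs ! j"
      by (metis in_set_conv_nth)
    then have "i < j" "j < Suc i"
      using that i strict_sorted_nth_less_iff[OF sorted] by auto
    then show False
      by simp
  qed
  then show ?gap
    using i strict_sorted_nth_less_iff[OF sorted] by auto
next
  assume gap: ?gap
  then obtain i j where ij: "i < length xs" "u = xs ! i" "j < length xs" "v = xs ! j"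
    by (metis in_set_conv_nth)
  then have "i < j"
    using gap strict_sorted_nth_less_iff[OF sorted] by blast
  moreover have "\<not> Suc i < j"
  proof
    assume "Suc i < j"
    then have "xs ! Suc i \<in> {u<..<v} \<inter> set xs"
      using ij strict_sorted_nth_less_iff[OF sorted] by auto
    then show False
      using gap by blast
  qed
  ultimately have "j = Suc i"
    by simp
  then show ?consecutive
    using ij by blast
qed

lemma finite_gap_around:
  fixes D :: "'a::linorder set"
  assumes "finite D" "d \<in> D" "d \<le> x" "e \<in> D" "x < e"
  shows "\<exists>u\<in>D. \<exists>v\<in>D. u \<le> x \<and> x < v \<and> {u<..<v} \<inter> D = {}"
proof -
  let ?L = "{y\<in>D. y \<le> x}" and ?R = "{y\<in>D. x < y}"
  define u where "u = Max ?L"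
  define v where "v = Min ?R"
  have "d \<in> ?L" "e \<in> ?R"
    using assms by simp_all
  then have L: "finite ?L" "?L \<noteq> {}" and R: "finite ?R" "?R \<noteq> {}"
    using assms(1) by auto
  have "u \<in> ?L" "v \<in> ?R"
    unfolding u_def v_def using Max_in[OF L] Min_in[OF R] .
  moreover have "\<And>y. y \<in> ?L \<Longrightarrow> y \<le> u"
    unfolding u_def by (rule Max_ge[OF L(1)])
  moreover have "\<And>y. y \<in> ?R \<Longrightarrow> v \<le> y"
    unfolding v_def by (rule Min_le[OF R(1)])
  ultimately have u: "u \<in> D" "u \<le> x" "\<And>y. y \<in> D \<Longrightarrow> y \<le> x \<Longrightarrow> y \<le> u"
    and v: "v \<in> D" "x < v" "\<And>y. y \<in> D \<Longrightarrow> x < y \<Longrightarrow> v \<le> y"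
    by simp_all
  have "y \<notin> D" if "u < y" "y < v" for y
    using that u(3) v(3) leD not_le by metis
  then have "{u<..<v} \<inter> D = {}"
    by auto
  then show ?thesis
    using u v by blast
qed

text \<open>The breakpoint condition of \<^const>\<open>thompsonF_carrier\<close>, with the sorted list of
  breakpoints replaced by its set \<open>D\<close>: consecutive breakpoints are the pairs of points of
  \<open>D\<close> with no point of \<open>D\<close> in between.\<close>
definition dyadic_pl :: "real set \<Rightarrow> (real \<Rightarrow> real) \<Rightarrow> bool" where
  "dyadic_pl D f \<longleftrightarrow> finite D \<and> D \<subseteq> {0..1} \<and> 0 \<in> D \<and> 1 \<in> D \<and> (\<forall>x\<in>D. dyadic x) \<and>
     (\<forall>u\<in>D. \<forall>v\<in>D. u < v \<longrightarrow> {u<..<v} \<inter> D = {} \<longrightarrow>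
        (\<exists>k::int. \<exists>b. \<forall>x\<in>{u..v}. f x = 2 powr k * x + b))"

lemma dyadic_pl_affine_on:
  assumes pl: "dyadic_pl D f" and "0 \<le> u" "u < v" "v \<le> 1" "{u<..<v} \<inter> D = {}"
  shows "\<exists>k::int. \<exists>b. \<forall>x\<in>{u..v}. f x = 2 powr k * x + b"
proof -
  obtain a c where ac: "a \<in> D" "c \<in> D" "a \<le> u" "u < c" "{a<..<c} \<inter> D = {}"
    using finite_gap_around[of D 0 u 1] pl assms by (auto simp: dyadic_pl_def)
  have "v \<le> c"
  proof (rule ccontr)
    assume "\<not> v \<le> c"
    then have "c \<in> {u<..<v} \<inter> D"
      using ac by auto
    then show False
      using assms by blast
  qed
  have "a < c"
    using ac by simp
  then obtain k :: int and b :: real where "\<forall>x\<in>{a..c}. f x = 2 powr k * x + b"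
    using pl ac unfolding dyadic_pl_def by blast
  then show ?thesis
    using ac \<open>v \<le> c\<close> by auto
qed

lemma dyadic_pl_cover:
  assumes pl: "dyadic_pl D f" and x: "0 \<le> x" "x \<le> 1"
  shows "\<exists>u\<in>D. \<exists>v\<in>D. u < v \<and> {u<..<v} \<inter> D = {} \<and> x \<in> {u..v}"
proof (cases "x < 1")
  case True
  then obtain u v where "u \<in> D" "v \<in> D" "u \<le> x" "x < v" "{u<..<v} \<inter> D = {}"
    using finite_gap_around[of D 0 x 1] pl x by (auto simp: dyadic_pl_def)
  then show ?thesis
    by (intro bexI[of _ u] bexI[of _ v]) auto
next
  case False
  let ?L = "{y\<in>D. y < 1}"
  define u where "u = Max ?L"
  have "0 \<in> ?L"
    using pl by (simp add: dyadic_pl_def)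
  then have L: "finite ?L" "?L \<noteq> {}"
    using pl by (auto simp: dyadic_pl_def)
  have "u \<in> ?L"
    unfolding u_def by (rule Max_in[OF L])
  moreover have "\<And>y. y \<in> ?L \<Longrightarrow> y \<le> u"
    unfolding u_def by (rule Max_ge[OF L(1)])
  ultimately have u: "u \<in> D" "u < 1" "\<And>y. y \<in> D \<Longrightarrow> y < 1 \<Longrightarrow> y \<le> u"
    by simp_all
  have "y \<notin> D" if "u < y" "y < 1" for y
    using that u(3) leD by blast
  then have "{u<..<1} \<inter> D = {}"
    by auto
  moreover have "1 \<in> D"
    using pl by (simp add: dyadic_pl_def)
  ultimately show ?thesis
    using u False x by (intro bexI[of _ u] bexI[of _ 1]) auto
qed

lemma dyadic_pl_strict_mono_on:
  assumes pl: "dyadic_pl D f"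
  shows "strict_mono_on {0..1} f"
proof -
  have "f x < f y" if "0 \<le> x" "x < y" "y \<le> 1" for x y
    using that
  proof (induction "card ({x<..<y} \<inter> D)" arbitrary: x y rule: less_induct)
    case less
    show ?case
    proof (cases "{x<..<y} \<inter> D = {}")
      case True
      then obtain k :: int and b :: real where "\<forall>t\<in>{x..y}. f t = 2 powr k * t + b"
        using dyadic_pl_affine_on[OF pl less.prems] by blast
      then show ?thesis
        using less.prems by simp
    next
      case False
      then obtain e where e: "x < e" "e < y" "e \<in> D"
        by auto
      have "finite D"
        using pl by (simp add: dyadic_pl_def)
      then have "card ({x<..<e} \<inter> D) < card ({x<..<y} \<inter> D)"
        "card ({e<..<y} \<inter> D) < card ({x<..<y} \<inter> D)"
        using e by (auto intro!: psubset_card_mono)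
      then have "f x < f e" "f e < f y"
        using less.prems e by (auto intro!: less.hyps)
      then show ?thesis
        by simp
    qed
  qed
  then show ?thesis
    by (auto simp: strict_mono_on_def)
qed

lemma dyadic_pl_continuous_on:
  assumes pl: "dyadic_pl D f"
  shows "continuous_on {0..1} f"
proof -
  define I where "I = {p \<in> D \<times> D. fst p < snd p \<and> {fst p<..<snd p} \<inter> D = {}}"
  have sub: "D \<subseteq> {0..1}" and "finite D"
    using pl by (simp_all add: dyadic_pl_def)
  moreover have "I \<subseteq> D \<times> D"
    by (auto simp: I_def)
  ultimately have "finite I"
    by (meson finite_SigmaI finite_subset)
  have "x \<in> (\<Union>p\<in>I. {fst p..snd p})" if x: "x \<in> {0..1}" for x
  proof -
    obtain u v where "u \<in> D" "v \<in> D" "u < v" "{u<..<v} \<inter> D = {}" "x \<in> {u..v}"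
      using dyadic_pl_cover[OF pl, of x] x by auto
    then show ?thesis
      by (intro UN_I[of "(u, v)"]) (simp_all add: I_def)
  qed
  then have "{0..1} \<subseteq> (\<Union>p\<in>I. {fst p..snd p})"
    by blast
  moreover have "{fst p..snd p} \<subseteq> {0..1}" if "p \<in> I" for p
    using that subsetD[OF sub, of "fst p"] subsetD[OF sub, of "snd p"] by (auto simp: I_def)
  then have "(\<Union>p\<in>I. {fst p..snd p}) \<subseteq> {0..1}"
    by (rule UN_least)
  ultimately have cover: "{0..1} = (\<Union>p\<in>I. {fst p..snd p})"
    by (rule equalityI)
  have "continuous_on {fst p..snd p} f" if p: "p \<in> I" for p
  proof -
    have "fst p \<in> D" "snd p \<in> D" "fst p < snd p" "{fst p<..<snd p} \<inter> D = {}"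
      using p by (simp_all add: I_def mem_Times_iff)
    then obtain k :: int and b :: real where kb: "\<forall>x\<in>{fst p..snd p}. f x = 2 powr k * x + b"
      using pl unfolding dyadic_pl_def by blast
    have "continuous_on {fst p..snd p} (\<lambda>x. 2 powr k * x + b)"
      by (intro continuous_intros)
    then show ?thesis
      by (rule continuous_on_eq) (use kb in simp)
  qed
  then have "continuous_on (\<Union>p\<in>I. {fst p..snd p}) f"
    using \<open>finite I\<close> by (intro continuous_on_closed_Union) auto
  then show ?thesis
    using cover by simp
qed

lemma dyadic_pl_dyadic_image:
  assumes pl: "dyadic_pl D f" and "f 0 = 0" "x \<in> D"
  shows "dyadic (f x)"
  using assms(3)
proof (induction "card {d\<in>D. d < x}" arbitrary: x rule: less_induct)
  case less
  have fin: "finite D" and sub: "D \<subseteq> {0..1}" and "0 \<in> D" and dy: "\<forall>x\<in>D. dyadic x"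
    using pl by (auto simp: dyadic_pl_def)
  show ?case
  proof (cases "x = 0")
    case True
    then show ?thesis
      using \<open>f 0 = 0\<close> dyadic_of_int[of 0] by simp
  next
    case False
    let ?L = "{d\<in>D. d < x}"
    have "x \<in> {0..1}"
      using sub less.prems by blast
    then have "0 \<in> ?L"
      using \<open>0 \<in> D\<close> False by simp
    then have L: "finite ?L" "?L \<noteq> {}"
      using fin by auto
    define u where "u = Max ?L"
    have u: "u \<in> D" "u < x"
      using Max_in[OF L] unfolding u_def by auto
    have "y \<notin> D" if "u < y" "y < x" for y
      using that Max_ge[OF L(1), of y] by (auto simp: u_def)
    then have "{u<..<x} \<inter> D = {}"
      by auto
    then obtain k :: int and b :: real where kb: "\<forall>t\<in>{u..x}. f t = 2 powr k * t + b"
      using pl u less.prems unfolding dyadic_pl_def by blast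
    have "card {d\<in>D. d < u} < card ?L"
      using u L(1) by (intro psubset_card_mono) auto
    then have "dyadic (f u)"
      using less.hyps u by blast
    moreover have "f x = f u + 2 powr k * (x - u)"
      using kb u by (simp add: algebra_simps)
    moreover have "dyadic (2 powr k * (x - u))"
      using dy u less.prems by (intro dyadic_two_powr_mult dyadic_diff) auto
    ultimately show ?thesis
      by (simp add: dyadic_add)
  qed
qed

lemma dyadic_pl_dyadic_iff:
  assumes pl: "dyadic_pl D f" and "f 0 = 0" "0 \<le> x" "x \<le> 1"
  shows "dyadic (f x) \<longleftrightarrow> dyadic x"
proof -
  obtain u v where uv: "u \<in> D" "v \<in> D" "u < v" "{u<..<v} \<inter> D = {}" "x \<in> {u..v}"
    using dyadic_pl_cover[OF pl assms(3,4)] by blast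
  obtain k :: int and b :: real where kb: "\<forall>t\<in>{u..v}. f t = 2 powr k * t + b"
    using pl uv unfolding dyadic_pl_def by blast
  have fx: "f x = f u + 2 powr k * (x - u)"
    using kb uv by (simp add: algebra_simps)
  have x: "x = u + 2 powr of_int (- k) * (f x - f u)"
    unfolding fx by (simp add: powr_minus field_simps)
  have u: "dyadic u" "dyadic (f u)"
    using pl uv(1) dyadic_pl_dyadic_image[OF pl assms(2) uv(1)] unfolding dyadic_pl_def by blast+
  show ?thesis
  proof
    assume "dyadic (f x)"
    then show "dyadic x"
      using u by (subst x) (intro dyadic_add dyadic_two_powr_mult dyadic_diff)
  next
    assume "dyadic x"
    then show "dyadic (f x)"
      using u by (subst fx) (intro dyadic_add dyadic_two_powr_mult dyadic_diff)
  qed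
qed

section \<open>Thompson's group F\<close>

lemma strict_mono_on_Icc_homeomorphism:
  fixes f :: "real \<Rightarrow> real"
  assumes mono: "strict_mono_on {a..b} f" and cont: "continuous_on {a..b} f"
    and "f a = a" "f b = b"
  shows "\<exists>g. homeomorphism {a..b} {a..b} f g"
proof -
  have "f x \<in> {a..b}" if "x \<in> {a..b}" for x
    using that strict_mono_on_leD[OF mono, of a x] strict_mono_on_leD[OF mono, of x b] assms(3,4)
    by auto
  moreover have "y \<in> f ` {a..b}" if "y \<in> {a..b}" for y
    using IVT'[of f a y b] that cont assms(3,4) by force
  ultimately have "f ` {a..b} = {a..b}"
    by blast
  then show ?thesis
    using homeomorphism_compact[OF compact_Icc cont] strict_mono_on_imp_inj_on[OF mono] by blast
qed

lemma thompsonF_carrierI: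
  assumes pl: "dyadic_pl D f" and "f 0 = 0" "f 1 = 1" and outside: "\<And>x. x \<notin> {0..1} \<Longrightarrow> f x = x"
  shows "f \<in> thompsonF_carrier"
proof -
  have mono: "strict_mono_on {0..1} f"
    by (rule dyadic_pl_strict_mono_on[OF pl])
  obtain g where "homeomorphism {0..1} {0..1} f g"
    using strict_mono_on_Icc_homeomorphism[OF mono dyadic_pl_continuous_on[OF pl]] assms(2,3)
    by blast
  define xs where "xs = sorted_list_of_set D"
  have fin: "finite D" and sub: "D \<subseteq> {0..1}" and "0 \<in> D" "1 \<in> D" and dy: "\<forall>x\<in>D. dyadic x"
    using pl by (simp_all add: dyadic_pl_def)
  then have set_xs: "set xs = D" and sorted: "sorted_wrt (<) xs"
    by (simp_all add: xs_def)
  have "card {0, 1::real} \<le> card D"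
    using fin \<open>0 \<in> D\<close> \<open>1 \<in> D\<close> by (intro card_mono) auto
  then have len: "2 \<le> length xs"
    using fin by (simp add: xs_def)
  then have "xs \<noteq> []"
    by auto
  then have "hd xs \<in> {0..1}" "last xs \<in> {0..1}"
    using sub set_xs hd_in_set last_in_set by blast+
  moreover have "hd xs \<le> 0" "1 \<le> last xs"
    using strict_sorted_hd_le_le_last[OF sorted] set_xs \<open>0 \<in> D\<close> \<open>1 \<in> D\<close> by auto
  ultimately have "hd xs = 0" "last xs = 1"
    by auto
  moreover have "\<exists>(k::int) b. \<forall>x\<in>{xs ! i..xs ! Suc i}. f x = 2 powr k * x + b"
    if "Suc i < length xs" for i
  proof -
    have "xs ! i \<in> D" "xs ! Suc i \<in> D" "xs ! i < xs ! Suc i" "{xs ! i<..<xs ! Suc i} \<inter> D = {}"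
      using strict_sorted_consecutive_iff[OF sorted, of "xs ! i" "xs ! Suc i"] that set_xs by auto
    then show ?thesis
      using pl unfolding dyadic_pl_def by blast
  qed
  ultimately show ?thesis
    unfolding thompsonF_carrier_def using \<open>homeomorphism _ _ f g\<close> mono outside len sorted dy set_xs
    by blast
qed

lemma thompsonF_carrier_dyadic_pl:
  assumes "f \<in> thompsonF_carrier"
  obtains D where "dyadic_pl D f"
proof -
  obtain xs where len: "2 \<le> length xs" and sorted: "sorted_wrt (<) xs" and "hd xs = 0"
    and "last xs = 1" and dy: "\<forall>x\<in>set xs. dyadic x"
    and pieces: "\<forall>i. Suc i < length xs \<longrightarrow>
      (\<exists>(k::int) b. \<forall>x\<in>{xs ! i..xs ! Suc i}. f x = 2 powr k * x + b)"
    using assms unfolding thompsonF_carrier_def by blast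
  have ne: "xs \<noteq> []"
    using len by auto
  have "set xs \<subseteq> {0..1}"
    using strict_sorted_hd_le_le_last[OF sorted] \<open>hd xs = 0\<close> \<open>last xs = 1\<close> by auto
  moreover have "0 \<in> set xs" "1 \<in> set xs"
    using \<open>hd xs = 0\<close> \<open>last xs = 1\<close> hd_in_set[OF ne] last_in_set[OF ne] by simp_all
  moreover have "\<exists>k::int. \<exists>b. \<forall>x\<in>{u..v}. f x = 2 powr k * x + b"
    if "u \<in> set xs" "v \<in> set xs" "u < v" "{u<..<v} \<inter> set xs = {}" for u v
    using strict_sorted_consecutive_iff[OF sorted, of u v] that pieces by blast
  ultimately have "dyadic_pl (set xs) f"
    using dy unfolding dyadic_pl_def by blast
  then show ?thesis
    by (rule that)
qed

lemma thompsonF_carrier_fixes_outside: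
  "f \<in> thompsonF_carrier \<Longrightarrow> x \<notin> {0..1} \<Longrightarrow> f x = x"
  unfolding thompsonF_carrier_def by blast

lemma thompsonF_carrier_continuous_on:
  "f \<in> thompsonF_carrier \<Longrightarrow> continuous_on {0..1} f"
  unfolding thompsonF_carrier_def homeomorphism_def by blast

lemma thompsonF_carrier_image:
  "f \<in> thompsonF_carrier \<Longrightarrow> f ` {0..1} = {0..1}"
  unfolding thompsonF_carrier_def homeomorphism_def by blast

lemma thompsonF_carrier_strict_mono_on:
  "f \<in> thompsonF_carrier \<Longrightarrow> strict_mono_on {0..1} f"
  unfolding thompsonF_carrier_def by blast

lemma thompsonF_carrier_fixes_endpoints:
  assumes f: "f \<in> thompsonF_carrier"
  shows "f 0 = 0" "f 1 = 1"
proof -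
  note mono = thompsonF_carrier_strict_mono_on[OF f] and img = thompsonF_carrier_image[OF f]
  have "0 \<in> f ` {0..1}" "1 \<in> f ` {0..1}"
    unfolding img by simp_all
  then obtain x y where "x \<in> {0..1}" "f x = 0" "y \<in> {0..1}" "f y = 1"
    by (metis imageE)
  moreover have "f 0 \<in> {0..1}" "f 1 \<in> {0..1}"
    using rev_image_eqI[of 0 "{0..1}" "f 0" f] rev_image_eqI[of 1 "{0..1}" "f 1" f] img by simp_all
  ultimately show "f 0 = 0" "f 1 = 1"
    using strict_mono_on_leD[OF mono, of 0 x] strict_mono_on_leD[OF mono, of y 1] by auto
qed

lemma thompsonF_carrier_strict_mono:
  assumes f: "f \<in> thompsonF_carrier"
  shows "strict_mono f"
proof (rule strict_monoI)
  fix x y :: real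
  assume "x < y"
  have inside: "f t \<in> {0..1}" if "t \<in> {0..1}" for t
    using thompsonF_carrier_image[OF f] that by blast
  consider "x \<in> {0..1}" "y \<in> {0..1}" | "x \<notin> {0..1}" | "y \<notin> {0..1}"
    by blast
  then show "f x < f y"
  proof cases
    case 1
    then show ?thesis
      using thompsonF_carrier_strict_mono_on[OF f] \<open>x < y\<close> by (simp add: strict_mono_on_def)
  next
    case 2
    then show ?thesis
      using \<open>x < y\<close> inside[of y] thompsonF_carrier_fixes_outside[OF f, of x]
        thompsonF_carrier_fixes_outside[OF f, of y] by fastforce
  next
    case 3
    then show ?thesis
      using \<open>x < y\<close> inside[of x] thompsonF_carrier_fixes_outside[OF f, of x]
        thompsonF_carrier_fixes_outside[OF f, of y] by fastforce
  qed
qed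

lemma thompsonF_carrier_less_iff: "f \<in> thompsonF_carrier \<Longrightarrow> f x < f y \<longleftrightarrow> x < y"
  using thompsonF_carrier_strict_mono strict_mono_less by blast

lemma thompsonF_carrier_le_iff: "f \<in> thompsonF_carrier \<Longrightarrow> f x \<le> f y \<longleftrightarrow> x \<le> y"
  using thompsonF_carrier_strict_mono strict_mono_less_eq by blast

lemma affine_on_comp:
  fixes f g :: "real \<Rightarrow> real" and k1 k2 :: int
  assumes "\<forall>x\<in>{u..v}. g x = 2 powr k1 * x + b1" "\<forall>y\<in>g ` {u..v}. f y = 2 powr k2 * y + b2"
  shows "\<forall>x\<in>{u..v}. (f \<circ> g) x = 2 powr (k1 + k2) * x + (2 powr k2 * b1 + b2)"
  using assms by (simp add: powr_add algebra_simps)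

lemma affine_on_inverse:
  fixes f h :: "real \<Rightarrow> real" and k :: int
  assumes "\<forall>x\<in>{u..v}. f x = 2 powr k * x + b" "\<And>y. y \<in> S \<Longrightarrow> h y \<in> {u..v} \<and> f (h y) = y"
  shows "\<forall>y\<in>S. h y = 2 powr (- k) * y + - (2 powr (- k) * b)"
  using assms by (force simp: powr_minus field_simps)

lemma thompsonF_carrier_gap_image:
  assumes g: "g \<in> thompsonF_carrier" and "E \<subseteq> {0..1}" "{u<..<v} \<inter> g -` E = {}"
  shows "{g u<..<g v} \<inter> E = {}"
proof (rule ccontr)
  assume "{g u<..<g v} \<inter> E \<noteq> {}"
  then obtain e where e: "g u < e" "e < g v" "e \<in> E"
    by auto
  then have "e \<in> g ` {0..1}"
    using \<open>E \<subseteq> {0..1}\<close> thompsonF_carrier_image[OF g] by auto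
  then obtain w where "g w = e"
    by blast
  then have "w \<in> {u<..<v} \<inter> g -` E"
    using e thompsonF_carrier_less_iff[OF g] by auto
  then show False
    using assms(3) by blast
qed

lemma thompsonF_carrier_comp_affine_on:
  assumes f: "f \<in> thompsonF_carrier" "dyadic_pl Df f" and g: "g \<in> thompsonF_carrier" "dyadic_pl Dg g"
    and uv: "0 \<le> u" "u < v" "v \<le> 1" "{u<..<v} \<inter> (Dg \<union> g -` Df) = {}"
  shows "\<exists>k::int. \<exists>b. \<forall>x\<in>{u..v}. (f \<circ> g) x = 2 powr k * x + b"
proof -
  have "Df \<subseteq> {0..1}"
    using f(2) by (simp add: dyadic_pl_def)
  have "{u<..<v} \<inter> Dg = {}"
    using uv(4) by auto
  then obtain k1 :: int and b1 where kb1: "\<forall>x\<in>{u..v}. g x = 2 powr k1 * x + b1"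
    using dyadic_pl_affine_on[OF g(2) uv(1-3)] by blast
  have "{g u<..<g v} \<inter> Df = {}"
    using uv(4) thompsonF_carrier_gap_image[OF g(1) \<open>Df \<subseteq> {0..1}\<close>] by blast
  moreover have "g u < g v" "0 \<le> g u" "g v \<le> 1"
    using thompsonF_carrier_less_iff[OF g(1)] thompsonF_carrier_image[OF g(1)] uv(1-3) by auto
  ultimately obtain k2 :: int and b2 where "\<forall>y\<in>{g u..g v}. f y = 2 powr k2 * y + b2"
    using dyadic_pl_affine_on[OF f(2)] by blast
  moreover have "g ` {u..v} \<subseteq> {g u..g v}"
    using thompsonF_carrier_le_iff[OF g(1)] by auto
  ultimately show ?thesis
    using affine_on_comp[OF kb1, of f k2 b2] by blast
qed

lemma thompsonF_carrier_comp:
  assumes f: "f \<in> thompsonF_carrier" and g: "g \<in> thompsonF_carrier"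
  shows "f \<circ> g \<in> thompsonF_carrier"
proof -
  obtain Df where pf: "dyadic_pl Df f"
    using thompsonF_carrier_dyadic_pl[OF f] .
  obtain Dg where pg: "dyadic_pl Dg g"
    using thompsonF_carrier_dyadic_pl[OF g] .
  have "finite Df" and "Df \<subseteq> {0..1}" and dyf: "\<forall>x\<in>Df. dyadic x"
    using pf by (simp_all add: dyadic_pl_def)
  have "finite Dg" "Dg \<subseteq> {0..1}" "0 \<in> Dg" "1 \<in> Dg" and dyg: "\<forall>x\<in>Dg. dyadic x"
    using pg by (simp_all add: dyadic_pl_def)
  have "g -` Df \<subseteq> {0..1}"
    using thompsonF_carrier_fixes_outside[OF g] \<open>Df \<subseteq> {0..1}\<close> by fastforce
  define D where "D = Dg \<union> g -` Df"
  have "D \<subseteq> {0..1}" "0 \<in> D" "1 \<in> D"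
    unfolding D_def using \<open>g -` Df \<subseteq> {0..1}\<close> \<open>Dg \<subseteq> {0..1}\<close> \<open>0 \<in> Dg\<close> \<open>1 \<in> Dg\<close> by auto
  moreover have "finite D"
    unfolding D_def using \<open>finite Dg\<close> \<open>finite Df\<close> thompsonF_carrier_strict_mono[OF g]
    by (simp add: finite_vimageI strict_mono_imp_inj_on)
  moreover have "dyadic x" if "x \<in> D" for x
  proof (cases "x \<in> Dg")
    case False
    then have "x \<in> {0..1}" "g x \<in> Df"
      using that \<open>g -` Df \<subseteq> {0..1}\<close> unfolding D_def by auto
    then show ?thesis
      using dyadic_pl_dyadic_iff[OF pg thompsonF_carrier_fixes_endpoints(1)[OF g]] dyf by auto
  qed (use dyg in blast)
  moreover have "\<exists>k::int. \<exists>b. \<forall>x\<in>{u..v}. (f \<circ> g) x = 2 powr k * x + b"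
    if uv: "u \<in> D" "v \<in> D" "u < v" "{u<..<v} \<inter> D = {}" for u v
  proof -
    have "0 \<le> u" "v \<le> 1"
      using uv \<open>D \<subseteq> {0..1}\<close> by auto
    then show ?thesis
      using thompsonF_carrier_comp_affine_on[OF f pf g pg _ uv(3)] uv(4) unfolding D_def by blast
  qed
  ultimately have "dyadic_pl D (f \<circ> g)"
    unfolding dyadic_pl_def by blast
  then show ?thesis
    using thompsonF_carrier_fixes_endpoints[OF f] thompsonF_carrier_fixes_endpoints[OF g]
      thompsonF_carrier_fixes_outside[OF f] thompsonF_carrier_fixes_outside[OF g]
    by (intro thompsonF_carrierI) auto
qed

lemma dyadic_pl_inverse:
  assumes f: "f \<in> thompsonF_carrier" and pf: "dyadic_pl Df f" and fh: "\<And>y. f (h y) = y"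
  shows "dyadic_pl (f ` Df) h"
proof -
  have "finite Df" "Df \<subseteq> {0..1}" "0 \<in> Df" "1 \<in> Df"
    using pf by (simp_all add: dyadic_pl_def)
  have f01: "f 0 = 0" "f 1 = 1"
    using thompsonF_carrier_fixes_endpoints[OF f] by simp_all
  have "f ` Df \<subseteq> {0..1}"
    using \<open>Df \<subseteq> {0..1}\<close> thompsonF_carrier_image[OF f] by blast
  moreover have "0 \<in> f ` Df" "1 \<in> f ` Df"
    using \<open>0 \<in> Df\<close> \<open>1 \<in> Df\<close> f01 by (metis image_eqI)+
  moreover have "\<forall>x\<in>f ` Df. dyadic x"
    using dyadic_pl_dyadic_image[OF pf f01(1)] by blast
  moreover have "\<exists>k::int. \<exists>b. \<forall>y\<in>{f u..f v}. h y = 2 powr k * y + b"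
    if uv: "u \<in> Df" "v \<in> Df" "f u < f v" "{f u<..<f v} \<inter> f ` Df = {}" for u v
  proof -
    have "e \<notin> Df" if "u < e" "e < v" for e
    proof
      assume "e \<in> Df"
      then have "f e \<in> {f u<..<f v} \<inter> f ` Df"
        using that thompsonF_carrier_less_iff[OF f] by auto
      then show False
        using uv(4) by blast
    qed
    then have "{u<..<v} \<inter> Df = {}"
      by auto
    moreover have "u < v"
      using uv(3) thompsonF_carrier_less_iff[OF f] by simp
    ultimately obtain k :: int and b where kb: "\<forall>x\<in>{u..v}. f x = 2 powr k * x + b"
      using pf uv unfolding dyadic_pl_def by blast
    have "h y \<in> {u..v}" if "y \<in> {f u..f v}" for y
      using that fh[of y] thompsonF_carrier_le_iff[OF f, of u "h y"] thompsonF_carrier_le_iff[OF f, of "h y" v]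
      by simp
    then show ?thesis
      using affine_on_inverse[OF kb, of "{f u..f v}" h] fh by blast
  qed
  ultimately show ?thesis
    unfolding dyadic_pl_def using \<open>finite Df\<close> by blast
qed

lemma thompsonF_carrier_inverse:
  assumes f: "f \<in> thompsonF_carrier"
  obtains h where "h \<in> thompsonF_carrier" "h \<circ> f = id" "f \<circ> h = id"
proof -
  obtain Df where pf: "dyadic_pl Df f"
    using thompsonF_carrier_dyadic_pl[OF f] .
  obtain g where "homeomorphism {0..1} {0..1} f g"
    using f unfolding thompsonF_carrier_def by blast
  then have gf: "\<And>x. x \<in> {0..1} \<Longrightarrow> g (f x) = x" and fg: "\<And>y. y \<in> {0..1} \<Longrightarrow> f (g y) = y"
    unfolding homeomorphism_def by auto
  define h where "h = (\<lambda>y. if y \<in> {0..1} then g y else y)"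
  have hf: "h (f x) = x" for x
  proof (cases "x \<in> {0..1}")
    case True
    then have "f x \<in> {0..1}"
      using thompsonF_carrier_image[OF f] by blast
    then show ?thesis
      using gf True by (simp add: h_def)
  qed (auto simp: h_def thompsonF_carrier_fixes_outside[OF f])
  have fh: "f (h y) = y" for y
    using fg thompsonF_carrier_fixes_outside[OF f, of y] by (simp add: h_def)
  have "h 0 = 0" "h 1 = 1"
    using hf[of 0] hf[of 1] thompsonF_carrier_fixes_endpoints[OF f] by simp_all
  with dyadic_pl_inverse[OF f pf fh] have "h \<in> thompsonF_carrier"
    by (rule thompsonF_carrierI) (auto simp: h_def)
  moreover have "h \<circ> f = id" "f \<circ> h = id"
    using hf fh by (simp_all add: fun_eq_iff)
  ultimately show ?thesis
    by (rule that)
qed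

lemma id_in_thompsonF_carrier: "id \<in> thompsonF_carrier"
proof (rule thompsonF_carrierI)
  show "dyadic_pl {0, 1} id"
    unfolding dyadic_pl_def
    using dyadic_of_int[of 0] dyadic_of_int[of 1] by (auto intro!: exI[of _ 0])
qed simp_all

lemma thompsonF_simps [simp]:
  "carrier thompsonF = thompsonF_carrier"
  "f \<otimes>\<^bsub>thompsonF\<^esub> g = f \<circ> g"
  "\<one>\<^bsub>thompsonF\<^esub> = id"
  by (simp_all add: thompsonF_def)

lemma thompsonF_group: "group thompsonF"
proof (rule groupI)
  show "\<exists>h\<in>carrier thompsonF. h \<otimes>\<^bsub>thompsonF\<^esub> f = \<one>\<^bsub>thompsonF\<^esub>"
    if "f \<in> carrier thompsonF" for f
    using that thompsonF_carrier_inverse by (metis thompsonF_simps)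
qed (simp_all add: thompsonF_carrier_comp id_in_thompsonF_carrier o_assoc)

interpretation thompsonF: group thompsonF
  by (rule thompsonF_group)

lemma thompsonF_inv:
  assumes "f \<in> thompsonF_carrier"
  shows "inv\<^bsub>thompsonF\<^esub> f \<circ> f = id" "f \<circ> inv\<^bsub>thompsonF\<^esub> f = id"
  using thompsonF.l_inv[of f] thompsonF.r_inv[of f] assms by simp_all

lemma thompsonF_nat_pow: "f [^]\<^bsub>thompsonF\<^esub> (n::nat) = f ^^ n"
  by (induction n) (simp_all add: thompsonF_def comp_def funpow_swap1)

section \<open>Bumps\<close>

definition moves_right_within :: "'a::linorder \<Rightarrow> 'a \<Rightarrow> ('a \<Rightarrow> 'a) \<Rightarrow> bool" where
  "moves_right_within p q h \<longleftrightarrow>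
     (\<forall>s\<in>{p<..<q}. s < h s \<and> h s < q) \<and> (\<forall>s. s \<notin> {p<..<q} \<longrightarrow> h s = s)"

lemma moves_right_within_funpow:
  assumes h: "moves_right_within p q h" and "0 < n"
  shows "moves_right_within p q (h ^^ n)"
proof -
  have "\<forall>s\<in>{p<..<q}. s < (h ^^ Suc m) s \<and> (h ^^ Suc m) s < q" for m
  proof (induction m)
    case (Suc m)
    show ?case
    proof
      fix s
      assume "s \<in> {p<..<q}"
      then have "s < (h ^^ Suc m) s" "(h ^^ Suc m) s < q"
        using Suc.IH by blast+
      then have "s < (h ^^ Suc m) s" "(h ^^ Suc m) s \<in> {p<..<q}"
        using \<open>s \<in> {p<..<q}\<close> by auto
      then show "s < (h ^^ Suc (Suc m)) s \<and> (h ^^ Suc (Suc m)) s < q"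
        using h unfolding moves_right_within_def by force
    qed
  qed (use h in \<open>simp add: moves_right_within_def\<close>)
  moreover have "(h ^^ m) s = s" if "s \<notin> {p<..<q}" for s m
    using h that by (induction m) (simp_all add: moves_right_within_def)
  ultimately show ?thesis
    using \<open>0 < n\<close> gr0_implies_Suc unfolding moves_right_within_def by blast
qed

definition bump :: "real \<Rightarrow> real \<Rightarrow> real \<Rightarrow> real" where
  "bump p L x =
    (if x < p then x else if x \<le> p + L then 2 * x - p else if x \<le> p + 2 * L then x + L
     else if x \<le> p + 4 * L then x / 2 + p / 2 + 2 * L else x)"

lemma moves_right_within_bump:
  assumes "0 < L"
  shows "moves_right_within p (p + 4 * L) (bump p L)"
  using assms unfolding moves_right_within_def bump_def by (auto simp: field_simps)

lemma bump_affine_on: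
  assumes "0 < L" and pieces: "v \<le> p \<or> (p \<le> u \<and> v \<le> p + L) \<or> (p + L \<le> u \<and> v \<le> p + 2 * L) \<or>
    (p + 2 * L \<le> u \<and> v \<le> p + 4 * L) \<or> p + 4 * L \<le> u"
  shows "\<exists>k::int. \<exists>b. \<forall>x\<in>{u..v}. bump p L x = 2 powr k * x + b"
proof -
  have "\<forall>x\<in>{u..v}. bump p L x = 2 powr of_int 0 * x + 0" if "v \<le> p \<or> p + 4 * L \<le> u"
    using that \<open>0 < L\<close> by (auto simp: bump_def)
  moreover have "\<forall>x\<in>{u..v}. bump p L x = 2 powr of_int 1 * x + - p" if "p \<le> u" "v \<le> p + L"
    using that by (auto simp: bump_def)
  moreover have "\<forall>x\<in>{u..v}. bump p L x = 2 powr of_int 0 * x + L" if "p + L \<le> u" "v \<le> p + 2 * L"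
    using that \<open>0 < L\<close> by (auto simp: bump_def)
  moreover have "\<forall>x\<in>{u..v}. bump p L x = 2 powr of_int (- 1) * x + (p / 2 + 2 * L)"
    if "p + 2 * L \<le> u" "v \<le> p + 4 * L"
    using that \<open>0 < L\<close> by (auto simp: bump_def powr_minus)
  ultimately show ?thesis
    using pieces by blast
qed

lemma bump_in_thompsonF_carrier:
  assumes "dyadic p" "dyadic L" "0 \<le> p" "0 < L" "p + 4 * L \<le> 1"
  shows "bump p L \<in> thompsonF_carrier"
proof (rule thompsonF_carrierI)
  let ?D = "{0, p, p + L, p + 2 * L, p + 4 * L, 1}"
  have "dyadic (2 * L)" "dyadic (4 * L)"
    using dyadic_add[of L L] dyadic_add[of "2 * L" "2 * L"] assms(2) by simp_all
  then have "\<forall>x\<in>?D. dyadic x"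
    using assms(1,2) dyadic_add dyadic_of_int[of 0] dyadic_of_int[of 1] by auto
  moreover have "\<exists>k::int. \<exists>b. \<forall>x\<in>{u..v}. bump p L x = 2 powr k * x + b"
    if "u < v" and gap: "{u<..<v} \<inter> ?D = {}" for u v
  proof -
    have side: "t \<le> u \<or> v \<le> t" if "t \<in> ?D" for t
    proof (rule ccontr)
      assume "\<not> (t \<le> u \<or> v \<le> t)"
      then have "t \<in> {u<..<v} \<inter> ?D"
        using that by auto
      then show False
        using gap by blast
    qed
    have "p \<le> u \<or> v \<le> p" "p + L \<le> u \<or> v \<le> p + L" "p + 2 * L \<le> u \<or> v \<le> p + 2 * L"
      "p + 4 * L \<le> u \<or> v \<le> p + 4 * L"
      by (intro side; simp)+
    then show ?thesis
      using \<open>u < v\<close> assms(4) by (intro bump_affine_on) linarith+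
  qed
  ultimately show "dyadic_pl ?D (bump p L)"
    using assms(3-5) unfolding dyadic_pl_def by auto
qed (use assms in \<open>auto simp: bump_def\<close>)

section \<open>Commutators and supports\<close>

lemma commutator_below_iff:
  fixes a ai h hi :: "'a::linorder \<Rightarrow> 'a"
  assumes "mono a" "a \<circ> ai = id" and h: "moves_right_within p q h" "h \<circ> hi = id" "hi \<circ> h = id"
    and off: "\<And>s. s \<in> {p<..<q} \<Longrightarrow> a s \<notin> {p<..<q}"
  shows "(a \<circ> h \<circ> ai \<circ> hi) s < s \<longleftrightarrow> s \<in> {p<..<q}"
proof -
  have aai: "a (ai x) = x" and hhi: "h (hi x) = x" and hih: "hi (h x) = x" for x
    using assms(2) h(2,3) by (simp_all add: fun_eq_iff)
  have h_in: "s < h s \<and> h s < q" if "s \<in> {p<..<q}" for s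
    using h(1) that by (simp add: moves_right_within_def)
  have h_out: "h s = s" if "s \<notin> {p<..<q}" for s
    using h(1) that by (simp add: moves_right_within_def)
  show ?thesis
  proof
    assume "s \<in> {p<..<q}"
    define t where "t = hi s"
    have "h t = s"
      using hhi by (simp add: t_def)
    then have t: "t \<in> {p<..<q}"
      using h_out \<open>s \<in> {p<..<q}\<close> by metis
    then have "t < s"
      using h_in \<open>h t = s\<close> by blast
    have "ai t \<notin> {p<..<q}"
      using off[of "ai t"] aai t by auto
    then have "(a \<circ> h \<circ> ai \<circ> hi) s = t"
      using h_out aai by (simp add: t_def)
    then show "(a \<circ> h \<circ> ai \<circ> hi) s < s"
      using \<open>t < s\<close> by simp
  next
    assume "(a \<circ> h \<circ> ai \<circ> hi) s < s"
    show "s \<in> {p<..<q}"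
    proof (rule ccontr)
      assume "s \<notin> {p<..<q}"
      then have "hi s = s"
        using h_out hih by metis
      moreover have "ai s \<le> h (ai s)"
        using h_in h_out by (metis less_imp_le order_refl)
      then have "s \<le> a (h (ai s))"
        using \<open>mono a\<close> aai by (metis monoD)
      ultimately show False
        using \<open>(a \<circ> h \<circ> ai \<circ> hi) s < s\<close> by simp
    qed
  qed
qed

lemma interval_automorphism_fixes_endpoint:
  fixes b bi :: "real \<Rightarrow> real"
  assumes mono: "strict_mono b" "strict_mono bi" and inv: "\<And>x. b (bi x) = x" "\<And>x. bi (b x) = x"
    and maps: "b ` {p<..<q} \<subseteq> {p<..<q}" "bi ` {p<..<q} \<subseteq> {p<..<q}" and "p < q"
  shows "b p = p"
proof (rule ccontr)
  define m where "m = (p + q) / 2"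
  have m: "m \<in> {p<..<q}"
    using \<open>p < q\<close> by (simp add: m_def)
  then have "b m \<in> {p<..<q}" "bi m \<in> {p<..<q}"
    using maps by blast+
  assume "b p \<noteq> p"
  then consider "p < b p" | "b p < p"
    by linarith
  then show False
  proof cases
    case 1
    moreover have "b p < b m"
      using m mono(1) by (simp add: strict_mono_less)
    ultimately have "b p \<in> {p<..<q}"
      using \<open>b m \<in> {p<..<q}\<close> by auto
    then have "bi (b p) \<in> {p<..<q}"
      using maps(2) by blast
    then show False
      using inv(2) by simp
  next
    case 2
    then have "p < bi p"
      using mono(2) inv(2) by (metis strict_mono_less)
    moreover have "bi p < bi m"
      using m mono(2) by (simp add: strict_mono_less)
    ultimately have "bi p \<in> {p<..<q}"
      using \<open>bi m \<in> {p<..<q}\<close> by auto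
    then have "b (bi p) \<in> {p<..<q}"
      using maps(1) by blast
    then show False
      using inv(1) by simp
  qed
qed

lemma commuting_fixes_endpoint:
  fixes b bi c :: "real \<Rightarrow> real"
  assumes b: "strict_mono b" "b \<circ> bi = id" "bi \<circ> b = id" and comm: "b \<circ> c = c \<circ> b"
    and c: "\<And>s. c s < s \<longleftrightarrow> s \<in> {p<..<q}" and "p < q"
  shows "b p = p"
proof -
  have bbi: "b (bi x) = x" and bib: "bi (b x) = x" for x
    using b(2,3) by (simp_all add: fun_eq_iff)
  have "strict_mono bi"
    using b(1) bbi by (metis strict_monoI strict_mono_less)
  have "bi \<circ> c = c \<circ> bi"
    using comm bbi bib by (metis comp_apply ext)
  have "d ` {p<..<q} \<subseteq> {p<..<q}" if "strict_mono d" "d \<circ> c = c \<circ> d" for d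
  proof
    fix t
    assume "t \<in> d ` {p<..<q}"
    then obtain s where "s \<in> {p<..<q}" "t = d s"
      by blast
    then have "d (c s) < d s"
      using c[of s] \<open>strict_mono d\<close> strict_mono_less by blast
    then show "t \<in> {p<..<q}"
      using c[of t] fun_cong[OF \<open>d \<circ> c = c \<circ> d\<close>, of s] \<open>t = d s\<close> by simp
  qed
  then show ?thesis
    using interval_automorphism_fixes_endpoint[OF b(1) \<open>strict_mono bi\<close> bbi bib] b(1) comm
      \<open>strict_mono bi\<close> \<open>bi \<circ> c = c \<circ> bi\<close> \<open>p < q\<close> by blast
qed

lemma continuous_displaces_small_intervals:
  fixes f :: "real \<Rightarrow> real"
  assumes "isCont f p" "f p \<noteq> p"
  obtains \<delta> where "0 < \<delta>" "\<And>q s. q \<le> p + \<delta> \<Longrightarrow> s \<in> {p<..<q} \<Longrightarrow> f s \<notin> {p<..<q}"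
proof -
  define d where "d = \<bar>f p - p\<bar>"
  have "0 < d"
    using assms(2) by (simp add: d_def)
  then obtain \<eta> where "0 < \<eta>" and \<eta>: "\<And>s. \<bar>s - p\<bar> < \<eta> \<Longrightarrow> \<bar>f s - f p\<bar> < d / 2"
    using assms(1) unfolding continuous_at_eps_delta dist_real_def by (meson half_gt_zero)
  have "f s \<notin> {p<..<q}" if "q \<le> p + min \<eta> (d / 2)" "s \<in> {p<..<q}" for q s
  proof
    assume "f s \<in> {p<..<q}"
    then have "\<bar>f s - p\<bar> < d / 2"
      using that by auto
    moreover have "\<bar>f s - f p\<bar> < d / 2"
      using \<eta> that by force
    ultimately have "\<bar>f s - f p\<bar> + \<bar>f s - p\<bar> < d"
      using add_strict_mono by fastforce
    moreover have "d \<le> \<bar>f s - f p\<bar> + \<bar>f s - p\<bar>"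
      using abs_triangle_ineq[of "f p - f s" "f s - p"] by (simp add: d_def abs_minus_commute)
    ultimately show False
      by simp
  qed
  then show ?thesis
    using \<open>0 < \<eta>\<close> \<open>0 < d\<close> by (intro that[of "min \<eta> (d / 2)"]) auto
qed

lemma open_contains_dyadic:
  assumes "open W" "z \<in> W"
  shows "\<exists>p\<in>W. dyadic p"
proof -
  obtain e where "0 < e" "ball z e \<subseteq> W"
    using assms openE by blast
  moreover obtain p where "dyadic p" "z < p" "p < z + e"
    using dyadic_between[of z "z + e"] \<open>0 < e\<close> by auto
  ultimately show ?thesis
    by (auto simp: dist_real_def subset_iff)
qed

lemma thompsonF_carrier_continuous:
  assumes f: "f \<in> thompsonF_carrier"
  shows "continuous_on UNIV f"
proof -
  have fixed: "f x = x" if "x \<le> 0 \<or> 1 \<le> x" for x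
    using that thompsonF_carrier_fixes_outside[OF f, of x] thompsonF_carrier_fixes_endpoints[OF f]
    by (cases "x = 0 \<or> x = 1") auto
  have "continuous_on {..0} f" "continuous_on {1..} f"
    using fixed by (intro continuous_on_eq[OF continuous_on_id]; simp)+
  then have "continuous_on ({..0} \<union> {0..1} \<union> {1..}) f"
    using thompsonF_carrier_continuous_on[OF f] by (intro continuous_on_closed_Un) auto
  moreover have "{..0} \<union> {0..1} \<union> {1..} = (UNIV :: real set)"
    by auto
  ultimately show ?thesis
    by simp
qed

lemma thompsonF_carrier_moved_in_interior:
  assumes "f \<in> thompsonF_carrier" "f s \<noteq> s"
  shows "s \<in> {0<..<1}"
proof -
  have "s \<in> {0..1}" "s \<noteq> 0" "s \<noteq> 1"
    using thompsonF_carrier_fixes_outside[OF assms(1), of s] thompsonF_carrier_fixes_endpoints[OF assms(1)]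
      assms(2) by auto
  then show ?thesis
    by auto
qed

lemma thompsonF_carrier_eq_id:
  assumes "f \<in> thompsonF_carrier" "\<And>s. s \<in> {0<..<1} \<Longrightarrow> f s = s"
  shows "f = id"
  using assms thompsonF_carrier_moved_in_interior[OF assms(1)] by (metis eq_id_iff)

lemma bump_unit_interval_in_thompsonF_carrier: "bump 0 (1/4) \<in> thompsonF_carrier"
  using bump_in_thompsonF_carrier[of 0 "1/4"] dyadic_of_int[of 0] dyadic_one_over_power[of 2]
  by simp

lemma moves_right_within_bump_unit_interval:
  "0 < n \<Longrightarrow> moves_right_within 0 1 (bump 0 (1/4) ^^ n)"
  using moves_right_within_funpow[OF moves_right_within_bump[of "1/4" 0]] by simp

lemma thompsonF_carrier_infinite: "infinite thompsonF_carrier"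
proof
  assume "finite thompsonF_carrier"
  then have "finite (rcosets\<^bsub>thompsonF\<^esub> {id})"
    using thompsonF.rcosets_subset_PowG[OF thompsonF.triv_subgroup] finite_subset by fastforce
  then obtain n :: nat where "0 < n" "bump 0 (1/4) ^^ n = id"
    using thompsonF.finite_index_power_in_subgroup[OF thompsonF.triv_subgroup] bump_unit_interval_in_thompsonF_carrier
    by (auto simp: thompsonF_nat_pow)
  moreover have "(1/2::real) \<in> {0<..<1}"
    by simp
  then have "(1/2::real) < (bump 0 (1/4) ^^ n) (1/2)"
    using moves_right_within_bump_unit_interval[OF \<open>0 < n\<close>]
    unfolding moves_right_within_def by blast
  ultimately show False
    by simp
qed

text \<open>The situation of the two factors of a finite-index image of a direct product in F.\<close>
locale thompsonF_commuting_factors =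
  fixes A B :: "(real \<Rightarrow> real) set"
  assumes subgroup_A: "subgroup A thompsonF" and subgroup_B: "subgroup B thompsonF"
    and commute: "\<And>a b. a \<in> A \<Longrightarrow> b \<in> B \<Longrightarrow> a \<circ> b = b \<circ> a"
    and power_in_product:
      "\<And>g. g \<in> thompsonF_carrier \<Longrightarrow> \<exists>n>0. \<exists>a\<in>A. \<exists>b\<in>B. g ^^ n = a \<circ> b"
begin

lemma A_carrier: "a \<in> A \<Longrightarrow> a \<in> thompsonF_carrier"
  using subgroup.subset[OF subgroup_A] by auto

lemma B_carrier: "b \<in> B \<Longrightarrow> b \<in> thompsonF_carrier"
  using subgroup.subset[OF subgroup_B] by auto

lemma commutator_with_bump:
  assumes a: "a \<in> A" and bump: "dyadic p" "dyadic L" "0 \<le> p" "0 < L" "p + 4 * L \<le> 1"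
    and off: "\<And>s. s \<in> {p<..<p + 4 * L} \<Longrightarrow> a s \<notin> {p<..<p + 4 * L}"
  obtains c where "c \<in> A" "\<And>s. c s < s \<longleftrightarrow> s \<in> {p<..<p + 4 * L}"
proof -
  obtain n a1 b1 where "0 < n" "a1 \<in> A" "b1 \<in> B" and h: "bump p L ^^ n = a1 \<circ> b1"
    using power_in_product[OF bump_in_thompsonF_carrier[OF bump]] by blast
  have "moves_right_within p (p + 4 * L) (a1 \<circ> b1)"
    using moves_right_within_funpow[OF moves_right_within_bump[OF \<open>0 < L\<close>, of p] \<open>0 < n\<close>] h
    by simp
  let ?inv = "m_inv thompsonF"
  have carrier: "a \<in> thompsonF_carrier" "a1 \<in> thompsonF_carrier" "b1 \<in> thompsonF_carrier"
    using a \<open>a1 \<in> A\<close> \<open>b1 \<in> B\<close> A_carrier B_carrier by auto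
  have inv_A: "?inv a \<in> A" "?inv a1 \<in> A"
    using subgroup.m_inv_closed[OF subgroup_A] a \<open>a1 \<in> A\<close> by simp_all
  define c where "c = a \<circ> a1 \<circ> ?inv a \<circ> ?inv a1"
  have "c \<in> A"
    using subgroup.m_closed[OF subgroup_A] a \<open>a1 \<in> A\<close> inv_A by (simp add: c_def)
  have "a1 (?inv a1 x) = x" "?inv a1 (a1 x) = x" "b1 (?inv b1 x) = x" "?inv b1 (b1 x) = x" for x
    using thompsonF_inv[OF carrier(2)] thompsonF_inv[OF carrier(3)] by (simp_all add: fun_eq_iff)
  then have hi: "(a1 \<circ> b1) \<circ> (?inv b1 \<circ> ?inv a1) = id" "(?inv b1 \<circ> ?inv a1) \<circ> (a1 \<circ> b1) = id"
    by (simp_all add: fun_eq_iff)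
  have "b1 (?inv a x) = ?inv a (b1 x)" "b1 (?inv b1 x) = x" for x
    using commute[OF inv_A(1) \<open>b1 \<in> B\<close>] thompsonF_inv(2)[OF carrier(3)] by (simp_all add: fun_eq_iff)
  \<comment> \<open>\<open>b1\<close> commutes with \<open>?inv a \<in> A\<close>, so the \<open>B\<close>-part of the power cancels in the commutator\<close>
  then have c_eq: "c = a \<circ> (a1 \<circ> b1) \<circ> ?inv a \<circ> (?inv b1 \<circ> ?inv a1)"
    by (simp add: c_def fun_eq_iff)
  have "mono a"
    using thompsonF_carrier_strict_mono[OF carrier(1)] strict_mono_mono by blast
  then have "c s < s \<longleftrightarrow> s \<in> {p<..<p + 4 * L}" for s
    unfolding c_eq using thompsonF_inv(2)[OF carrier(1)] \<open>moves_right_within _ _ (a1 \<circ> b1)\<close> hi off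
    by (rule commutator_below_iff)
  then show ?thesis
    using \<open>c \<in> A\<close> that by blast
qed

lemma disjoint_supports:
  assumes a: "a \<in> A" and b: "b \<in> B"
  shows "a z = z \<or> b z = z"
proof (rule ccontr)
  assume "\<not> (a z = z \<or> b z = z)"
  moreover have "open ({s. a s \<noteq> s} \<inter> {s. b s \<noteq> s})"
    using A_carrier[OF a] B_carrier[OF b]
    by (intro open_Int open_Collect_neq continuous_on_id thompsonF_carrier_continuous)
  ultimately obtain p where p: "dyadic p" "a p \<noteq> p" "b p \<noteq> p"
    using open_contains_dyadic[of _ z] by blast
  then have "p \<in> {0<..<1}"
    using thompsonF_carrier_moved_in_interior A_carrier[OF a] by blast
  have "isCont a p"
    using thompsonF_carrier_continuous[OF A_carrier[OF a]] continuous_on_eq_continuous_at by blast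
  then obtain \<delta> where "0 < \<delta>" and \<delta>: "\<And>q s. q \<le> p + \<delta> \<Longrightarrow> s \<in> {p<..<q} \<Longrightarrow> a s \<notin> {p<..<q}"
    using continuous_displaces_small_intervals p(2) by blast
  obtain n where n: "(1/2::real) ^ n < min \<delta> (1 - p) / 4"
    using real_arch_pow_inv[of "min \<delta> (1 - p) / 4" "1/2"] \<open>0 < \<delta>\<close> \<open>p \<in> {0<..<1}\<close> by auto
  define L :: real where "L = 1 / 2 ^ n"
  have L: "0 < L" "p + 4 * L \<le> p + \<delta>" "p + 4 * L \<le> 1"
    using n by (auto simp: L_def power_divide)
  obtain c where "c \<in> A" and c: "\<And>s. c s < s \<longleftrightarrow> s \<in> {p<..<p + 4 * L}"
    using commutator_with_bump[OF a p(1) dyadic_one_over_power[of n, folded L_def]]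
      \<delta>[OF L(2)] \<open>p \<in> {0<..<1}\<close> L by auto
  have "b p = p"
  proof (rule commuting_fixes_endpoint[where q = "p + 4 * L"])
    show "strict_mono b"
      using thompsonF_carrier_strict_mono B_carrier[OF b] by blast
    show "b \<circ> inv\<^bsub>thompsonF\<^esub> b = id" "inv\<^bsub>thompsonF\<^esub> b \<circ> b = id"
      using thompsonF_inv B_carrier[OF b] by blast+
    show "b \<circ> c = c \<circ> b"
      using commute[OF \<open>c \<in> A\<close> b] by simp
  qed (use c L in auto)
  then show False
    using p(3) by blast
qed

lemma trivial_factor: "A = {id} \<or> B = {id}"
proof -
  obtain n a b where "0 < n" "a \<in> A" "b \<in> B" and ab: "bump 0 (1/4) ^^ n = a \<circ> b"
    using power_in_product[OF bump_unit_interval_in_thompsonF_carrier] by blast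
  let ?U = "{s. a s \<noteq> s}" and ?V = "{s. b s \<noteq> s}"
  have "moves_right_within 0 1 (a \<circ> b)"
    using moves_right_within_bump_unit_interval[OF \<open>0 < n\<close>] ab by simp
  then have cover: "{0<..<1} \<subseteq> ?U \<union> ?V"
    by (force simp: moves_right_within_def)
  have disjoint: "?U \<inter> ?V \<inter> {0<..<1} = {}"
    using disjoint_supports[OF \<open>a \<in> A\<close> \<open>b \<in> B\<close>] by auto
  have "open ?U" "open ?V"
    using A_carrier[OF \<open>a \<in> A\<close>] B_carrier[OF \<open>b \<in> B\<close>]
    by (intro open_Collect_neq continuous_on_id thompsonF_carrier_continuous; simp)+
  from connectedD[OF connected_Ioo this disjoint cover]
  show ?thesis
  proof
    assume "?U \<inter> {0<..<1} = {}"
    then have "b s \<noteq> s" if "s \<in> {0<..<1}" for s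
      using that cover by blast
    then have "a' = id" if "a' \<in> A" for a'
      using thompsonF_carrier_eq_id[OF A_carrier[OF that]] disjoint_supports[OF that \<open>b \<in> B\<close>] by blast
    then show ?thesis
      using subgroup.one_closed[OF subgroup_A] by auto
  next
    assume "?V \<inter> {0<..<1} = {}"
    then have "a s \<noteq> s" if "s \<in> {0<..<1}" for s
      using that cover by blast
    then have "b' = id" if "b' \<in> B" for b'
      using thompsonF_carrier_eq_id[OF B_carrier[OF that]] disjoint_supports[OF \<open>a \<in> A\<close> that] by blast
    then show ?thesis
      using subgroup.one_closed[OF subgroup_B] by auto
  qed
qed

end

lemma DirProd_hom_thompsonF_commuting_factors:
  assumes "group G1" "group G2" and hom: "\<phi> \<in> hom (G1 \<times>\<times> G2) thompsonF"
    and fin: "finite (rcosets\<^bsub>thompsonF\<^esub> (\<phi> ` carrier (G1 \<times>\<times> G2)))"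
  shows "thompsonF_commuting_factors (\<phi> ` (carrier G1 \<times> {\<one>\<^bsub>G2\<^esub>})) (\<phi> ` ({\<one>\<^bsub>G1\<^esub>} \<times> carrier G2))"
proof -
  interpret G1: group G1 by fact
  interpret G2: group G2 by fact
  interpret \<phi>: group_hom "G1 \<times>\<times> G2" thompsonF \<phi>
    using DirProd_group[OF assms(1,2)] thompsonF_group hom by (simp add: group_hom_def group_hom_axioms_def)
  have split: "\<phi> (x, y) = \<phi> (x, \<one>\<^bsub>G2\<^esub>) \<circ> \<phi> (\<one>\<^bsub>G1\<^esub>, y)" "\<phi> (x, y) = \<phi> (\<one>\<^bsub>G1\<^esub>, y) \<circ> \<phi> (x, \<one>\<^bsub>G2\<^esub>)"
    if "x \<in> carrier G1" "y \<in> carrier G2" for x y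
    using hom_mult[OF hom, of "(x, \<one>\<^bsub>G2\<^esub>)" "(\<one>\<^bsub>G1\<^esub>, y)"] hom_mult[OF hom, of "(\<one>\<^bsub>G1\<^esub>, y)" "(x, \<one>\<^bsub>G2\<^esub>)"]
      that by simp_all
  show ?thesis
  proof (rule thompsonF_commuting_factors.intro)
    show "subgroup (\<phi> ` (carrier G1 \<times> {\<one>\<^bsub>G2\<^esub>})) thompsonF"
      "subgroup (\<phi> ` ({\<one>\<^bsub>G1\<^esub>} \<times> carrier G2)) thompsonF"
      using DirProd_subgroups[OF assms(1) G1.subgroup_self assms(2) G2.triv_subgroup]
        DirProd_subgroups[OF assms(1) G1.triv_subgroup assms(2) G2.subgroup_self]
      by (simp_all add: \<phi>.subgroup_img_is_subgroup)
    show "a \<circ> b = b \<circ> a"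
      if ab: "a \<in> \<phi> ` (carrier G1 \<times> {\<one>\<^bsub>G2\<^esub>})" "b \<in> \<phi> ` ({\<one>\<^bsub>G1\<^esub>} \<times> carrier G2)" for a b
    proof -
      obtain x y where "x \<in> carrier G1" "y \<in> carrier G2" "a = \<phi> (x, \<one>\<^bsub>G2\<^esub>)" "b = \<phi> (\<one>\<^bsub>G1\<^esub>, y)"
        using ab by blast
      then show ?thesis
        using split[of x y] by simp
    qed
    show "\<exists>n>0. \<exists>a\<in>\<phi> ` (carrier G1 \<times> {\<one>\<^bsub>G2\<^esub>}). \<exists>b\<in>\<phi> ` ({\<one>\<^bsub>G1\<^esub>} \<times> carrier G2). g ^^ n = a \<circ> b"
      if g: "g \<in> thompsonF_carrier" for g
    proof -
      obtain n :: nat where "0 < n" "g ^^ n \<in> \<phi> ` (carrier G1 \<times> carrier G2)"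
        using thompsonF.finite_index_power_in_subgroup[OF \<phi>.img_is_subgroup fin, of g] g
        by (auto simp only: thompsonF_nat_pow thompsonF_simps carrier_DirProd)
      then obtain x y where x: "x \<in> carrier G1" and y: "y \<in> carrier G2" and "g ^^ n = \<phi> (x, y)"
        by blast
      then have "g ^^ n = \<phi> (x, \<one>\<^bsub>G2\<^esub>) \<circ> \<phi> (\<one>\<^bsub>G1\<^esub>, y)"
        using split(1)[OF x y] by simp
      moreover have "\<phi> (x, \<one>\<^bsub>G2\<^esub>) \<in> \<phi> ` (carrier G1 \<times> {\<one>\<^bsub>G2\<^esub>})"
        "\<phi> (\<one>\<^bsub>G1\<^esub>, y) \<in> \<phi> ` ({\<one>\<^bsub>G1\<^esub>} \<times> carrier G2)"
        using x y by simp_all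
      ultimately show ?thesis
        using \<open>0 < n\<close> by blast
    qed
  qed
qed

theorem proposition7p1:
  fixes G1 :: "'a monoid" and G2 :: "'b monoid" and \<phi> :: "'a \<times> 'b \<Rightarrow> real \<Rightarrow> real"
  assumes "group G1" and "group G2"
    and "\<phi> \<in> hom (G1 \<times>\<times> G2) thompsonF"
    and "finite (rcosets\<^bsub>thompsonF\<^esub> (\<phi> ` carrier (G1 \<times>\<times> G2)))"
  shows "group thompsonF \<and> infinite (carrier thompsonF) \<and>
    (finite (\<phi> ` (carrier G1 \<times> {\<one>\<^bsub>G2\<^esub>})) \<or> finite (\<phi> ` ({\<one>\<^bsub>G1\<^esub>} \<times> carrier G2)))"
proof -
  interpret thompsonF_commuting_factors "\<phi> ` (carrier G1 \<times> {\<one>\<^bsub>G2\<^esub>})" "\<phi> ` ({\<one>\<^bsub>G1\<^esub>} \<times> carrier G2)"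
    using DirProd_hom_thompsonF_commuting_factors[OF assms] .
  show ?thesis
    using thompsonF_group thompsonF_carrier_infinite trivial_factor by auto
qed

end
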